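(* Let $\pi=(O,h)$ be the complete prefix unfolding of a 1-safe net system. Let $e_1$ be a cut-off event of $\pi$ and $e_1'$ its corresponding event, and suppose $h(e_1\bullet)=h(e_1'\bullet)$. Then for every event $e_2$ of $\pi$, $e_1'\triangleright e_2$ implies $h(e_1)<_{tar}h(e_2)$.
   Context: Petri net system $S=(N,M_0)$, $N=(P,T,F)$, markings, enabling and firing $M'=M-\bullet t+t\bullet$ as usual; $S$ is 1-safe if every reachable marking has at most one token per place. Transition adjacency relation: $t_1<_{tar}t_2$ iff there is a reachable marking $M_s$ enabling $t_1$ such that after firing $t_1$ from $M_s$, $t_2$ is enabled. Occurrence net $O=(C,E,G)$, $x<y$ iff a directed path with at least one arc from $x$ to $y$; configurations (conflict-free, backward closed event sets), local configuration $[e]=\{x\mid x<e\text{ or }x=e\}$, $Cut(\mathcal C)=(Min(O)\cup\mathcal C\bullet)\setminus\bullet\mathcal C$, $Mark(\mathcal C)=h(Cut(\mathcal C))$. With an adequate order $\prec$ (strict well-founded partial order on configurations refining strict inclusion of local configurations), $e$ is a cut-off event if there is $e'$ with $Mark([e])=Mark([e'])$ and $[e']\prec[e]$, and $e'$ is then its corresponding event. The complete prefix unfolding is the greatest backward closed subnet of the unfolding containing no events after a cut-off event. For a set of nodes $Y$, $\bullet Y=\bigcup_{y\in Y}\bullet y$; $Max(E_0)=\{e\in E_0\mid\forall e'\in E_0: e\not<e'\}$. Max-Event Adjacency: for events $e<f$, $e\triangleright f$ iff $e\in Max(\bullet(\bullet f))$. *)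

theory Defs
  imports Main
begin

definition preset :: "('a \<times> 'a) set \<Rightarrow> 'a \<Rightarrow> 'a set" where
  "preset F x = {y. (y, x) \<in> F}"

definition postset :: "('a \<times> 'a) set \<Rightarrow> 'a \<Rightarrow> 'a set" where
  "postset F x = {y. (x, y) \<in> F}"

definition preset_set :: "('a \<times> 'a) set \<Rightarrow> 'a set \<Rightarrow> 'a set" where
  "preset_set F Y = (\<Union>y\<in>Y. preset F y)"

definition postset_set :: "('a \<times> 'a) set \<Rightarrow> 'a set \<Rightarrow> 'a set" where
  "postset_set F Y = (\<Union>y\<in>Y. postset F y)"

definition net_system :: "'n set \<Rightarrow> 'n set \<Rightarrow> ('n \<times> 'n) set \<Rightarrow> ('n \<Rightarrow> nat) \<Rightarrow> bool" where
  "net_system P T F M0 \<longleftrightarrow> P \<inter> T = {} \<and> F \<subseteq> (P \<times> T) \<union> (T \<times> P) \<and> (\<forall>x. x \<notin> P \<longrightarrow> M0 x = 0)"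

definition enabled :: "'n set \<Rightarrow> ('n \<times> 'n) set \<Rightarrow> ('n \<Rightarrow> nat) \<Rightarrow> 'n \<Rightarrow> bool" where
  "enabled T F M t \<longleftrightarrow> t \<in> T \<and> (\<forall>p \<in> preset F t. 1 \<le> M p)"

definition fire :: "('n \<times> 'n) set \<Rightarrow> ('n \<Rightarrow> nat) \<Rightarrow> 'n \<Rightarrow> ('n \<Rightarrow> nat)" where
  "fire F M t = (\<lambda>p. M p - (if p \<in> preset F t then 1 else 0) + (if p \<in> postset F t then 1 else 0))"

inductive_set reach :: "'n set \<Rightarrow> ('n \<times> 'n) set \<Rightarrow> ('n \<Rightarrow> nat) \<Rightarrow> ('n \<Rightarrow> nat) set"
  for T F M0 where
    reach_init: "M0 \<in> reach T F M0"
  | reach_step: "M \<in> reach T F M0 \<Longrightarrow> enabled T F M t \<Longrightarrow> fire F M t \<in> reach T F M0"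

definition one_safe :: "'n set \<Rightarrow> ('n \<times> 'n) set \<Rightarrow> ('n \<Rightarrow> nat) \<Rightarrow> bool" where
  "one_safe T F M0 \<longleftrightarrow> (\<forall>M \<in> reach T F M0. \<forall>p. M p \<le> 1)"

definition tar :: "'n set \<Rightarrow> ('n \<times> 'n) set \<Rightarrow> ('n \<Rightarrow> nat) \<Rightarrow> 'n \<Rightarrow> 'n \<Rightarrow> bool" where
  "tar T F M0 t1 t2 \<longleftrightarrow>
     (\<exists>Ms \<in> reach T F M0. enabled T F Ms t1 \<and> enabled T F (fire F Ms t1) t2)"

text \<open>x < y iff (x,y) in G^+.\<close>

definition conflict :: "'c set \<Rightarrow> ('c \<times> 'c) set \<Rightarrow> 'c \<Rightarrow> 'c \<Rightarrow> bool" where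
  "conflict E G x y \<longleftrightarrow>
     (\<exists>e1 \<in> E. \<exists>e2 \<in> E. e1 \<noteq> e2 \<and> preset G e1 \<inter> preset G e2 \<noteq> {}
        \<and> (e1, x) \<in> G\<^sup>* \<and> (e2, y) \<in> G\<^sup>*)"

definition occurrence_net :: "'c set \<Rightarrow> 'c set \<Rightarrow> ('c \<times> 'c) set \<Rightarrow> bool" where
  "occurrence_net C E G \<longleftrightarrow>
     C \<inter> E = {} \<and> G \<subseteq> (C \<times> E) \<union> (E \<times> C)
     \<and> (\<forall>b \<in> C. \<forall>e1 e2. e1 \<in> preset G b \<and> e2 \<in> preset G b \<longrightarrow> e1 = e2)
     \<and> (\<forall>x. (x, x) \<notin> G\<^sup>+)
     \<and> (\<forall>x. finite {y. (y, x) \<in> G\<^sup>+})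
     \<and> (\<forall>x \<in> C \<union> E. \<not> conflict E G x x)"

definition min_conds :: "'c set \<Rightarrow> ('c \<times> 'c) set \<Rightarrow> 'c set" where
  "min_conds C G = {b \<in> C. preset G b = {}}"

definition coset :: "'c set \<Rightarrow> 'c set \<Rightarrow> ('c \<times> 'c) set \<Rightarrow> 'c set \<Rightarrow> bool" where
  "coset C E G X \<longleftrightarrow> X \<subseteq> C \<and>
     (\<forall>x \<in> X. \<forall>y \<in> X. x \<noteq> y \<longrightarrow> (x, y) \<notin> G\<^sup>+ \<and> (y, x) \<notin> G\<^sup>+ \<and> \<not> conflict E G x y)"

definition branching_process ::
  "'n set \<Rightarrow> 'n set \<Rightarrow> ('n \<times> 'n) set \<Rightarrow> ('n \<Rightarrow> nat) \<Rightarrow>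
   'c set \<Rightarrow> 'c set \<Rightarrow> ('c \<times> 'c) set \<Rightarrow> ('c \<Rightarrow> 'n) \<Rightarrow> bool" where
  "branching_process P T F M0 C E G h \<longleftrightarrow>
     occurrence_net C E G
     \<and> h ` C \<subseteq> P \<and> h ` E \<subseteq> T
     \<and> (\<forall>e \<in> E. bij_betw h (preset G e) (preset F (h e))
                \<and> bij_betw h (postset G e) (postset F (h e)))
     \<and> (\<forall>p. finite {b \<in> min_conds C G. h b = p} \<and> card {b \<in> min_conds C G. h b = p} = M0 p)
     \<and> (\<forall>e1 \<in> E. \<forall>e2 \<in> E. preset G e1 = preset G e2 \<and> h e1 = h e2 \<longrightarrow> e1 = e2)"

text \<open>The unfolding: the maximal branching process, characterised by being closed
  under all possible extensions.\<close>
definition is_unfolding ::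
  "'n set \<Rightarrow> 'n set \<Rightarrow> ('n \<times> 'n) set \<Rightarrow> ('n \<Rightarrow> nat) \<Rightarrow>
   'c set \<Rightarrow> 'c set \<Rightarrow> ('c \<times> 'c) set \<Rightarrow> ('c \<Rightarrow> 'n) \<Rightarrow> bool" where
  "is_unfolding P T F M0 C E G h \<longleftrightarrow>
     branching_process P T F M0 C E G h
     \<and> (\<forall>t \<in> T. \<forall>X. coset C E G X \<and> bij_betw h X (preset F t) \<longrightarrow>
            (\<exists>e \<in> E. preset G e = X \<and> h e = t))"

definition configuration :: "'c set \<Rightarrow> ('c \<times> 'c) set \<Rightarrow> 'c set \<Rightarrow> bool" where
  "configuration E G K \<longleftrightarrow> K \<subseteq> E
     \<and> (\<forall>e \<in> K. \<forall>e' \<in> E. (e', e) \<in> G\<^sup>+ \<longrightarrow> e' \<in> K)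
     \<and> (\<forall>x \<in> K. \<forall>y \<in> K. \<not> conflict E G x y)"

definition local_config :: "'c set \<Rightarrow> ('c \<times> 'c) set \<Rightarrow> 'c \<Rightarrow> 'c set" where
  "local_config E G e = {x \<in> E. (x, e) \<in> G\<^sup>+ \<or> x = e}"

definition Cut :: "'c set \<Rightarrow> ('c \<times> 'c) set \<Rightarrow> 'c set \<Rightarrow> 'c set" where
  "Cut C G K = (min_conds C G \<union> postset_set G K) - preset_set G K"

definition Mark :: "'c set \<Rightarrow> ('c \<times> 'c) set \<Rightarrow> ('c \<Rightarrow> 'n) \<Rightarrow> 'c set \<Rightarrow> 'n set" where
  "Mark C G h K = h ` Cut C G K"

definition adequate_order :: "'c set \<Rightarrow> ('c \<times> 'c) set \<Rightarrow> ('c set \<Rightarrow> 'c set \<Rightarrow> bool) \<Rightarrow> bool" where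
  "adequate_order E G prec \<longleftrightarrow>
     (\<forall>K. configuration E G K \<longrightarrow> \<not> prec K K)
     \<and> (\<forall>K1 K2 K3. configuration E G K1 \<and> configuration E G K2 \<and> configuration E G K3
          \<and> prec K1 K2 \<and> prec K2 K3 \<longrightarrow> prec K1 K3)
     \<and> wf {(K1, K2). configuration E G K1 \<and> configuration E G K2 \<and> prec K1 K2}
     \<and> (\<forall>e \<in> E. \<forall>e' \<in> E. local_config E G e \<subset> local_config E G e'
          \<longrightarrow> prec (local_config E G e) (local_config E G e'))"

definition corresponding :: "'c set \<Rightarrow> 'c set \<Rightarrow> ('c \<times> 'c) set \<Rightarrow> ('c \<Rightarrow> 'n) \<Rightarrow>
    ('c set \<Rightarrow> 'c set \<Rightarrow> bool) \<Rightarrow> 'c \<Rightarrow> 'c \<Rightarrow> bool" where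
  "corresponding C E G h prec e e' \<longleftrightarrow> e \<in> E \<and> e' \<in> E
     \<and> Mark C G h (local_config E G e) = Mark C G h (local_config E G e')
     \<and> prec (local_config E G e') (local_config E G e)"

definition cutoff :: "'c set \<Rightarrow> 'c set \<Rightarrow> ('c \<times> 'c) set \<Rightarrow> ('c \<Rightarrow> 'n) \<Rightarrow>
    ('c set \<Rightarrow> 'c set \<Rightarrow> bool) \<Rightarrow> 'c \<Rightarrow> bool" where
  "cutoff C E G h prec e \<longleftrightarrow> (\<exists>e'. corresponding C E G h prec e e')"

definition prefix_events :: "'c set \<Rightarrow> 'c set \<Rightarrow> ('c \<times> 'c) set \<Rightarrow> ('c \<Rightarrow> 'n) \<Rightarrow>
    ('c set \<Rightarrow> 'c set \<Rightarrow> bool) \<Rightarrow> 'c set" where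
  "prefix_events C E G h prec =
     {e \<in> E. \<not> (\<exists>e0 \<in> E. cutoff C E G h prec e0 \<and> (e0, e) \<in> G\<^sup>+)}"

definition Max_events :: "('c \<times> 'c) set \<Rightarrow> 'c set \<Rightarrow> 'c set" where
  "Max_events G E0 = {e \<in> E0. \<forall>e' \<in> E0. (e, e') \<notin> G\<^sup>+}"

definition max_adj :: "('c \<times> 'c) set \<Rightarrow> 'c \<Rightarrow> 'c \<Rightarrow> bool" where
  "max_adj G e f \<longleftrightarrow> (e, f) \<in> G\<^sup>+ \<and> e \<in> Max_events G (preset_set G (preset G f))"

end

theory Submission
  imports Defs
begin

text \<open>
  Let \<open>B\<^sub>1 = [e\<^sub>1] - {e\<^sub>1}\<close> and \<open>K = [e\<^sub>2] - {e\<^sub>2}\<close>. Since \<open>e\<^sub>1'\<close> is a maximal event below the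
  preset of \<open>e\<^sub>2\<close>, we have \<open>[e\<^sub>1'] \<subseteq> K\<close> and no event of \<open>K\<close> lies after \<open>e\<^sub>1'\<close>; hence the
  postset of \<open>e\<^sub>1'\<close> stays in the cut while the events of \<open>K - [e\<^sub>1']\<close> are added, and by
  1-safety these events never consume tokens of \<open>h(e\<^sub>1'\<bullet>) = h(e\<^sub>1\<bullet>)\<close>. So the markings
  \<open>Mark(Q) - h(e\<^sub>1\<bullet>) + \<bullet>h(e\<^sub>1)\<close>, for \<open>[e\<^sub>1'] \<subseteq> Q \<subseteq> K\<close>, form a firing sequence starting at
  \<open>Mark(B\<^sub>1)\<close> (as \<open>Mark([e\<^sub>1]) = Mark([e\<^sub>1'])\<close>). At its end \<open>h(e\<^sub>1)\<close> fires, producing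
  \<open>Mark(K)\<close>, which contains the image of \<open>\<bullet>e\<^sub>2\<close> and so enables \<open>h(e\<^sub>2)\<close>.
\<close>

lemma finite_fiber_inj_on:
  assumes "inj_on h S" shows "finite {b\<in>S. h b = p}"
proof -
  have "inj_on h {b\<in>S. h b = p}" using assms by (rule inj_on_subset) auto
  moreover have "finite (h ` {b\<in>S. h b = p})" by (rule finite_subset[of _ "{p}"]) auto
  ultimately show ?thesis using finite_imageD by blast
qed

lemma card_fiber_bij_betw:
  assumes "bij_betw h S S'" shows "card {b\<in>S. h b = p} = (if p \<in> S' then 1 else 0)"
proof (cases "p \<in> S'")
  case True
  then obtain b where b: "b \<in> S" "h b = p" using assms unfolding bij_betw_def by blast
  have "{b\<in>S. h b = p} = {b}" using b assms unfolding bij_betw_def inj_on_def by blast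
  then show ?thesis using True by simp
next
  case False
  then have "{b\<in>S. h b = p} = {}" using assms unfolding bij_betw_def by blast
  then show ?thesis using False by (simp only: card.empty if_False)
qed

subsection \<open>Backward firing\<close>

definition unfire :: "('n \<times> 'n) set \<Rightarrow> ('n \<Rightarrow> nat) \<Rightarrow> 'n \<Rightarrow> ('n \<Rightarrow> nat)" where
  "unfire F M t = (\<lambda>p. M p - (if p \<in> postset F t then 1 else 0) + (if p \<in> preset F t then 1 else 0))"

lemma unfire_fire:
  assumes "enabled T F M t" shows "unfire F (fire F M t) t = M"
  using assms unfolding enabled_def unfire_def fire_def by fastforce

lemma enabled_unfire_self: "t \<in> T \<Longrightarrow> enabled T F (unfire F M t) t"
  unfolding enabled_def unfire_def by simp

lemma fire_unfire:
  assumes "\<forall>p\<in>postset F t. 1 \<le> M p" shows "fire F (unfire F M t) t = M"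
  using assms unfolding unfire_def fire_def by fastforce

lemma enabled_unfire:
  assumes "enabled T F M u" and "preset F u \<inter> postset F t = {}"
  shows "enabled T F (unfire F M t) u"
  using assms unfolding enabled_def unfire_def by fastforce

lemma fire_unfire_commute:
  assumes "enabled T F M u" and "preset F u \<inter> postset F t = {}"
    and "\<forall>p\<in>postset F t. 1 \<le> M p"
  shows "fire F (unfire F M t) u = unfire F (fire F M u) t"
  using assms unfolding enabled_def unfire_def fire_def by fastforce

subsection \<open>Markings of cuts in a branching process\<close>

definition marking_of :: "('c \<Rightarrow> 'n) \<Rightarrow> 'c set \<Rightarrow> 'n \<Rightarrow> nat" where
  "marking_of h X = (\<lambda>p. card {b\<in>X. h b = p})"

locale branching_proc =
  fixes P T :: "'n set" and F :: "('n \<times> 'n) set" and M0 :: "'n \<Rightarrow> nat"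
    and C E :: "'c set" and G :: "('c \<times> 'c) set" and h :: "'c \<Rightarrow> 'n"
  assumes branching_process: "branching_process P T F M0 C E G h"
begin

lemma occurrence_net: "occurrence_net C E G"
  using branching_process unfolding branching_process_def by blast

lemma conditions_events_disjoint: "C \<inter> E = {}"
  using occurrence_net unfolding occurrence_net_def by blast

lemma flow_bipartite: "G \<subseteq> (C \<times> E) \<union> (E \<times> C)"
  using occurrence_net unfolding occurrence_net_def by blast

lemma condition_unique_producer: "(e1, b) \<in> G \<Longrightarrow> (e2, b) \<in> G \<Longrightarrow> b \<in> C \<Longrightarrow> e1 = e2"
  using occurrence_net unfolding occurrence_net_def preset_def by blast

lemma irrefl_trancl: "(x, x) \<notin> G\<^sup>+"
  using occurrence_net unfolding occurrence_net_def by blast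

lemma finite_predecessors: "finite {y. (y, x) \<in> G\<^sup>+}"
  using occurrence_net unfolding occurrence_net_def by blast

lemma not_self_conflict: "x \<in> E \<Longrightarrow> \<not> conflict E G x x"
  using occurrence_net unfolding occurrence_net_def by blast

lemma bij_betw_preset: "e \<in> E \<Longrightarrow> bij_betw h (preset G e) (preset F (h e))"
  using branching_process unfolding branching_process_def by blast

lemma bij_betw_postset: "e \<in> E \<Longrightarrow> bij_betw h (postset G e) (postset F (h e))"
  using branching_process unfolding branching_process_def by blast

lemma event_label: "e \<in> E \<Longrightarrow> h e \<in> T"
  using branching_process unfolding branching_process_def by blast

lemma initial_marking:
  "finite {b \<in> min_conds C G. h b = p}" "card {b \<in> min_conds C G. h b = p} = M0 p"
  using branching_process unfolding branching_process_def by blast+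

lemma preset_event_condition: "e \<in> E \<Longrightarrow> (b, e) \<in> G \<Longrightarrow> b \<in> C"
  using flow_bipartite conditions_events_disjoint by blast

lemma postset_event_condition: "e \<in> E \<Longrightarrow> (e, b) \<in> G \<Longrightarrow> b \<in> C"
  using flow_bipartite conditions_events_disjoint by blast

lemma preset_condition_event: "b \<in> C \<Longrightarrow> (g, b) \<in> G \<Longrightarrow> g \<in> E"
  using flow_bipartite conditions_events_disjoint by blast

lemma finite_local_config: "finite (local_config E G e)"
proof -
  have "local_config E G e \<subseteq> insert e {y. (y, e) \<in> G\<^sup>+}" unfolding local_config_def by blast
  then show ?thesis by (rule finite_subset) (simp add: finite_predecessors)
qed

lemma configuration_downward_closed:
  "configuration E G K \<Longrightarrow> Q \<subseteq> K \<Longrightarrow> \<forall>g\<in>Q. \<forall>g'\<in>E. (g', g) \<in> G\<^sup>+ \<longrightarrow> g' \<in> Q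
   \<Longrightarrow> configuration E G Q"
  unfolding configuration_def by blast

lemma configuration_local_config:
  assumes "e \<in> E" shows "configuration E G (local_config E G e)"
proof -
  have "\<not> conflict E G x y" if "x \<in> local_config E G e" "y \<in> local_config E G e" for x y
  proof
    assume "conflict E G x y"
    then obtain a b where ab: "a \<in> E" "b \<in> E" "a \<noteq> b" "preset G a \<inter> preset G b \<noteq> {}"
      and "(a, x) \<in> G\<^sup>*" "(b, y) \<in> G\<^sup>*"
      unfolding conflict_def by blast
    moreover have "(x, e) \<in> G\<^sup>*" "(y, e) \<in> G\<^sup>*"
      using that unfolding local_config_def by auto
    ultimately have "conflict E G e e"
      unfolding conflict_def by (meson rtrancl_trans)
    with not_self_conflict assms show False by blast
  qed
  then show ?thesis
    unfolding configuration_def local_config_def by (auto intro: trancl_trans)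
qed

lemma configuration_local_config_Diff:
  assumes "e \<in> E"
  shows "configuration E G (local_config E G e - {e})"
proof (rule configuration_downward_closed[OF configuration_local_config[OF assms]])
  show "\<forall>g\<in>local_config E G e - {e}. \<forall>g'\<in>E. (g', g) \<in> G\<^sup>+ \<longrightarrow> g' \<in> local_config E G e - {e}"
    unfolding local_config_def using irrefl_trancl by (blast intro: trancl_trans)
qed blast

lemma preset_subset_Cut:
  assumes K: "configuration E G (insert f Q)" and f: "f \<in> E" "f \<notin> Q"
    and preds: "\<forall>g\<in>E. (g, f) \<in> G\<^sup>+ \<longrightarrow> g \<in> Q"
  shows "preset G f \<subseteq> Cut C G Q"
proof
  fix b assume "b \<in> preset G f"
  then have bf: "(b, f) \<in> G" unfolding preset_def by simp
  then have bC: "b \<in> C" using preset_event_condition f by blast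
  have "b \<in> min_conds C G \<union> postset_set G Q"
  proof (cases "preset G b = {}")
    case True
    then show ?thesis using bC unfolding min_conds_def by blast
  next
    case False
    then obtain g where gb: "(g, b) \<in> G" unfolding preset_def by blast
    moreover have "g \<in> E" using preset_condition_event[OF bC gb] .
    moreover have "(g, f) \<in> G\<^sup>+" using gb bf by auto
    ultimately have "g \<in> Q" using preds by blast
    then show ?thesis using gb unfolding postset_set_def postset_def by blast
  qed
  moreover have "b \<notin> preset_set G Q"
  proof
    assume "b \<in> preset_set G Q"
    then obtain g where g: "g \<in> Q" "(b, g) \<in> G" unfolding preset_set_def preset_def by blast
    then have "g \<in> E" "g \<noteq> f" using K f unfolding configuration_def by auto
    then have "conflict E G g f"
      unfolding conflict_def preset_def using f(1) g(2) bf by blast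
    then show False using K g(1) unfolding configuration_def by blast
  qed
  ultimately show "b \<in> Cut C G Q" unfolding Cut_def by blast
qed

lemma postset_subset_Cut:
  assumes "e \<in> Q" and "\<forall>g\<in>Q. (e, g) \<notin> G\<^sup>+"
  shows "postset G e \<subseteq> Cut C G Q"
  using assms unfolding Cut_def postset_set_def preset_set_def postset_def preset_def
  by (blast intro: trancl_into_trancl2)

lemma Cut_insert:
  assumes Q: "configuration E G Q" and f: "f \<in> E" "f \<notin> Q"
  shows "Cut C G (insert f Q) = (Cut C G Q - preset G f) \<union> postset G f"
    and "postset G f \<inter> Cut C G Q = {}"
proof -
  have "postset G f \<inter> preset_set G Q = {}"
    using Q f unfolding configuration_def postset_def preset_set_def preset_def
    by (blast intro: trancl_into_trancl2)
  moreover have "postset G f \<inter> preset G f = {}"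
    using irrefl_trancl unfolding postset_def preset_def
    by (metis (no_types, lifting) disjoint_iff mem_Collect_eq r_into_trancl' trancl_into_trancl)
  ultimately show "Cut C G (insert f Q) = (Cut C G Q - preset G f) \<union> postset G f"
    unfolding Cut_def postset_set_def preset_set_def by auto
  have "postset G f \<inter> postset_set G Q = {}"
    using f condition_unique_producer postset_event_condition
    unfolding postset_def postset_set_def by blast
  then show "postset G f \<inter> Cut C G Q = {}"
    unfolding Cut_def postset_def min_conds_def preset_def by blast
qed

lemma finite_fiber_Cut:
  assumes "finite Q" "Q \<subseteq> E" shows "finite {b\<in>Cut C G Q. h b = p}"
proof -
  have "{b\<in>Cut C G Q. h b = p}
      \<subseteq> {b \<in> min_conds C G. h b = p} \<union> (\<Union>g\<in>Q. {b\<in>postset G g. h b = p})"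
    unfolding Cut_def postset_set_def by blast
  moreover have "finite {b\<in>postset G g. h b = p}" if "g \<in> Q" for g
    using that assms bij_betw_postset unfolding bij_betw_def by (blast intro: finite_fiber_inj_on)
  ultimately show ?thesis
    using initial_marking(1) assms(1) by (meson finite_UN_I finite_UnI finite_subset)
qed

lemma marking_of_Cut_insert:
  assumes Q: "configuration E G Q" "finite Q" and f: "f \<in> E" "f \<notin> Q"
    and pre: "preset G f \<subseteq> Cut C G Q"
  shows "enabled T F (marking_of h (Cut C G Q)) (h f)"
    and "marking_of h (Cut C G (insert f Q)) = fire F (marking_of h (Cut C G Q)) (h f)"
proof -
  have fin: "finite {b\<in>Cut C G Q. h b = p}" for p
    using finite_fiber_Cut Q unfolding configuration_def by blast
  have sub: "{b\<in>preset G f. h b = p} \<subseteq> {b\<in>Cut C G Q. h b = p}" for p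
    using pre by blast
  have pre_card: "card {b\<in>preset G f. h b = p} = (if p \<in> preset F (h f) then 1 else 0)" for p
    using card_fiber_bij_betw[OF bij_betw_preset[OF f(1)]] .
  have post_card: "card {b\<in>postset G f. h b = p} = (if p \<in> postset F (h f) then 1 else 0)" for p
    using card_fiber_bij_betw[OF bij_betw_postset[OF f(1)]] .
  have "1 \<le> card {b\<in>Cut C G Q. h b = p}" if "p \<in> preset F (h f)" for p
    using card_mono[OF fin[of p] sub[of p]] pre_card[of p] that by simp
  then show "enabled T F (marking_of h (Cut C G Q)) (h f)"
    unfolding enabled_def marking_of_def using event_label[OF f(1)] by blast
  show "marking_of h (Cut C G (insert f Q)) = fire F (marking_of h (Cut C G Q)) (h f)"
  proof
    fix p
    have eq: "{b\<in>Cut C G (insert f Q). h b = p} =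
       ({b\<in>Cut C G Q. h b = p} - {b\<in>preset G f. h b = p}) \<union> {b\<in>postset G f. h b = p}"
      using Cut_insert(1)[OF Q(1) f] by blast
    have disj: "({b\<in>Cut C G Q. h b = p} - {b\<in>preset G f. h b = p}) \<inter> {b\<in>postset G f. h b = p} = {}"
      using Cut_insert(2)[OF Q(1) f] by blast
    have "finite {b\<in>postset G f. h b = p}"
      using bij_betw_postset[OF f(1)] unfolding bij_betw_def by (blast intro: finite_fiber_inj_on)
    then have "card {b\<in>Cut C G (insert f Q). h b = p} =
        card {b\<in>Cut C G Q. h b = p} - card {b\<in>preset G f. h b = p} + card {b\<in>postset G f. h b = p}"
      unfolding eq using fin sub
      by (simp add: card_Un_disjoint[OF _ _ disj] card_Diff_subset[OF finite_subset[OF sub fin] sub])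
    then show "marking_of h (Cut C G (insert f Q)) p = fire F (marking_of h (Cut C G Q)) (h f) p"
      unfolding marking_of_def fire_def pre_card post_card by simp
  qed
qed

lemma exists_minimal_event:
  assumes "finite S" "S \<noteq> {}" obtains f where "f \<in> S" "\<forall>g\<in>S. (g, f) \<notin> G\<^sup>+"
proof -
  let ?R = "Restr (G\<^sup>+) S"
  have "acyclic (G\<^sup>+)" unfolding acyclic_def using irrefl_trancl by simp
  then have "acyclic ?R" by (rule acyclic_subset) blast
  then have "wf ?R" using assms(1) by (intro finite_acyclic_wf) auto
  then obtain f where "f \<in> S" "\<And>g. (g, f) \<in> ?R \<Longrightarrow> g \<notin> S"
    using wfE_min'[OF _ assms(2)] by metis
  then show ?thesis using that by blast
qed

lemma configuration_induct:
  assumes K: "finite K" "configuration E G K" and Q0: "configuration E G Q0" "Q0 \<subseteq> K" "R Q0"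
    and step: "\<And>Q f. configuration E G Q \<Longrightarrow> Q0 \<subseteq> Q \<Longrightarrow> Q \<subseteq> K \<Longrightarrow> f \<in> K \<Longrightarrow> f \<notin> Q
       \<Longrightarrow> configuration E G (insert f Q) \<Longrightarrow> \<forall>g\<in>E. (g, f) \<in> G\<^sup>+ \<longrightarrow> g \<in> Q
       \<Longrightarrow> R Q \<Longrightarrow> R (insert f Q)"
  shows "R K"
proof -
  have "R K" if "finite S" "K - Q = S" "configuration E G Q" "Q0 \<subseteq> Q" "Q \<subseteq> K" "R Q" for S Q
    using that
  proof (induction S arbitrary: Q rule: finite_psubset_induct)
    case (psubset S)
    show ?case
    proof (cases "S = {}")
      case True
      then show ?thesis using psubset.prems by (metis Diff_eq_empty_iff subset_antisym)
    next
      case False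
      obtain f where "f \<in> S" and min: "\<forall>g\<in>S. (g, f) \<notin> G\<^sup>+"
        by (rule exists_minimal_event[OF psubset.hyps False])
      then have f: "f \<in> K" "f \<notin> Q" using psubset.prems(1) by auto
      have preds: "\<forall>g\<in>E. (g, f) \<in> G\<^sup>+ \<longrightarrow> g \<in> Q"
        using K(2) f(1) min psubset.prems(1) unfolding configuration_def by blast
      have "configuration E G (insert f Q)"
      proof (rule configuration_downward_closed[OF K(2)])
        show "insert f Q \<subseteq> K" using f psubset.prems(4) by blast
        show "\<forall>g\<in>insert f Q. \<forall>g'\<in>E. (g', g) \<in> G\<^sup>+ \<longrightarrow> g' \<in> insert f Q"
          using preds psubset.prems(2) unfolding configuration_def by blast
      qed
      moreover have "R (insert f Q)"
        using step[OF psubset.prems(2-4) f _ preds psubset.prems(5)] calculation .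
      moreover have "K - insert f Q \<subset> S" using f psubset.prems(1) by blast
      ultimately show ?thesis using psubset.IH psubset.prems f by blast
    qed
  qed
  then show ?thesis using K(1) Q0 by blast
qed

lemma marking_of_Cut_reach:
  assumes "finite K" "configuration E G K"
  shows "marking_of h (Cut C G K) \<in> reach T F M0"
proof (rule configuration_induct[OF assms, of "{}"])
  have "Cut C G {} = min_conds C G" unfolding Cut_def postset_set_def preset_set_def by simp
  then have "marking_of h (Cut C G {}) = M0" unfolding marking_of_def using initial_marking by auto
  then show "marking_of h (Cut C G {}) \<in> reach T F M0" by (simp add: reach.reach_init)
next
  fix Q f assume Q: "configuration E G Q" "Q \<subseteq> K" and f: "f \<in> K" "f \<notin> Q"
    and fQ: "configuration E G (insert f Q)" and preds: "\<forall>g\<in>E. (g, f) \<in> G\<^sup>+ \<longrightarrow> g \<in> Q"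
    and IH: "marking_of h (Cut C G Q) \<in> reach T F M0"
  have "f \<in> E" using fQ unfolding configuration_def by blast
  moreover have "finite Q" using Q(2) assms(1) finite_subset by blast
  ultimately show "marking_of h (Cut C G (insert f Q)) \<in> reach T F M0"
    using marking_of_Cut_insert[OF Q(1) _ _ f(2) preset_subset_Cut[OF fQ _ f(2) preds]]
      reach.reach_step[OF IH] by metis
qed (auto simp: configuration_def)

lemma
  assumes "one_safe T F M0" "configuration E G K" "finite K"
  shows marking_of_Cut_one_safe: "marking_of h (Cut C G K) p = (if p \<in> Mark C G h K then 1 else 0)"
    and inj_on_Cut_one_safe: "inj_on h (Cut C G K)"
proof -
  have le: "card {b\<in>Cut C G K. h b = q} \<le> 1" for q
    using marking_of_Cut_reach[OF assms(3,2)] assms(1)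
    unfolding one_safe_def marking_of_def by fast
  have fin: "finite {b\<in>Cut C G K. h b = q}" for q
    using finite_fiber_Cut assms(2,3) unfolding configuration_def by blast
  show "marking_of h (Cut C G K) p = (if p \<in> Mark C G h K then 1 else 0)"
    using le[of p] fin[of p] unfolding marking_of_def Mark_def
    by (cases "p \<in> h ` Cut C G K") (auto simp: le_Suc_eq)
  show "inj_on h (Cut C G K)"
  proof (rule inj_onI)
    fix x y assume "x \<in> Cut C G K" "y \<in> Cut C G K" "h x = h y"
    then show "x = y"
      using le[of "h x"] fin[of "h x"] card_le_Suc0_iff_eq by (metis (mono_tags) One_nat_def mem_Collect_eq)
  qed
qed

lemma
  assumes "e \<in> E"
  shows marking_of_Cut_local_config:
      "marking_of h (Cut C G (local_config E G e))
         = fire F (marking_of h (Cut C G (local_config E G e - {e}))) (h e)"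
    and enabled_marking_of_Cut_local_config:
      "enabled T F (marking_of h (Cut C G (local_config E G e - {e}))) (h e)"
proof -
  have insert_eq: "insert e (local_config E G e - {e}) = local_config E G e"
    using assms unfolding local_config_def by blast
  have preds: "\<forall>g\<in>E. (g, e) \<in> G\<^sup>+ \<longrightarrow> g \<in> local_config E G e - {e}"
    unfolding local_config_def using irrefl_trancl by blast
  have pre: "preset G e \<subseteq> Cut C G (local_config E G e - {e})"
    using preset_subset_Cut[OF _ assms _ preds] configuration_local_config[OF assms]
    unfolding insert_eq by blast
  note step = marking_of_Cut_insert[OF configuration_local_config_Diff[OF assms] _ assms _ pre]
  show "marking_of h (Cut C G (local_config E G e))
      = fire F (marking_of h (Cut C G (local_config E G e - {e}))) (h e)"
    using step(2) finite_local_config unfolding insert_eq by blast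
  show "enabled T F (marking_of h (Cut C G (local_config E G e - {e}))) (h e)"
    using step(1) finite_local_config by blast
qed

lemma max_adj_local_config:
  assumes "max_adj G e f" "f \<in> E"
  shows "local_config E G e \<subseteq> local_config E G f - {f}"
    and "\<forall>g\<in>local_config E G f - {f}. (e, g) \<notin> G\<^sup>+"
proof -
  have ef: "(e, f) \<in> G\<^sup>+" and emax: "e \<in> Max_events G (preset_set G (preset G f))"
    using assms(1) unfolding max_adj_def by blast+
  show "local_config E G e \<subseteq> local_config E G f - {f}"
    using ef irrefl_trancl unfolding local_config_def by (blast intro: trancl_trans)
  show "\<forall>g\<in>local_config E G f - {f}. (e, g) \<notin> G\<^sup>+"
  proof (intro ballI notI)
    fix g assume g: "g \<in> local_config E G f - {f}" and eg: "(e, g) \<in> G\<^sup>+"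
    then have "g \<in> E" "(g, f) \<in> G\<^sup>+" unfolding local_config_def by auto
    \<comment> \<open>the last two arcs of a path from \<open>g\<close> to \<open>f\<close> lead through some \<open>g' \<in> \<bullet>(\<bullet>f)\<close>\<close>
    then obtain b where gb: "(g, b) \<in> G\<^sup>*" and bf: "(b, f) \<in> G"
      by (blast dest: tranclD2)
    then have "b \<in> C" using preset_event_condition assms(2) by blast
    then have "(g, b) \<in> G\<^sup>+"
      using gb \<open>g \<in> E\<close> conditions_events_disjoint by (auto simp: rtrancl_eq_or_trancl)
    then obtain g' where gg': "(g, g') \<in> G\<^sup>*" and g'b: "(g', b) \<in> G" by (blast dest: tranclD2)
    have "g' \<in> preset_set G (preset G f)"
      using g'b bf unfolding preset_set_def preset_def by blast
    moreover have "(e, g') \<in> G\<^sup>+" using eg gg' by (rule trancl_rtrancl_trancl)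
    ultimately show False using emax unfolding Max_events_def by blast
  qed
qed

context
  assumes one_safe: "one_safe T F M0"
begin

text \<open>
  Events not after \<open>e\<close> never consume the tokens of \<open>h(e\<bullet>)\<close>, so backward firing of a
  transition \<open>t\<close> with \<open>t\<bullet> = h(e\<bullet>)\<close> commutes with extending the configuration by them.
\<close>

lemma unfire_marking_of_Cut_reach:
  assumes K: "finite K" "configuration E G K" and A: "configuration E G A" "A \<subseteq> K"
    and e: "e \<in> A" "\<forall>g\<in>K. (e, g) \<notin> G\<^sup>+"
    and t: "postset F t = h ` postset G e"
    and base: "unfire F (marking_of h (Cut C G A)) t \<in> reach T F M0"
  shows "unfire F (marking_of h (Cut C G K)) t \<in> reach T F M0"
proof (rule configuration_induct[OF K A,
    where R = "\<lambda>Q. unfire F (marking_of h (Cut C G Q)) t \<in> reach T F M0"])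
  show "unfire F (marking_of h (Cut C G A)) t \<in> reach T F M0" by (rule base)
next
  fix Q f assume Q: "configuration E G Q" "A \<subseteq> Q" "Q \<subseteq> K" and f: "f \<in> K" "f \<notin> Q"
    and fQ: "configuration E G (insert f Q)" and preds: "\<forall>g\<in>E. (g, f) \<in> G\<^sup>+ \<longrightarrow> g \<in> Q"
    and IH: "unfire F (marking_of h (Cut C G Q)) t \<in> reach T F M0"
  let ?M = "marking_of h (Cut C G Q)"
  have fE: "f \<in> E" using fQ unfolding configuration_def by blast
  have finQ: "finite Q" using Q(3) K(1) finite_subset by blast
  have pre: "preset G f \<subseteq> Cut C G Q" by (rule preset_subset_Cut[OF fQ fE f(2) preds])
  have post: "postset G e \<subseteq> Cut C G Q"
    using postset_subset_Cut[of e Q] e Q(2,3) by blast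
  note step = marking_of_Cut_insert[OF Q(1) finQ fE f(2) pre]
  have "preset G f \<inter> postset G e = {}"
  proof (rule ccontr)
    assume "preset G f \<inter> postset G e \<noteq> {}"
    then obtain b where "(e, b) \<in> G" "(b, f) \<in> G" unfolding preset_def postset_def by blast
    then have "(e, f) \<in> G\<^sup>+" by auto
    then show False using e(2) f(1) by blast
  qed
  then have "h ` preset G f \<inter> h ` postset G e = {}"
    using inj_on_image_Int[OF inj_on_Cut_one_safe[OF one_safe Q(1) finQ] pre post] by simp
  then have disj: "preset F (h f) \<inter> postset F t = {}"
    using bij_betw_preset[OF fE] t unfolding bij_betw_def by simp
  have tokens: "\<forall>p\<in>postset F t. 1 \<le> ?M p"
    using post t unfolding marking_of_Cut_one_safe[OF one_safe Q(1) finQ] Mark_def by auto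
  have "fire F (unfire F ?M t) (h f) = unfire F (marking_of h (Cut C G (insert f Q))) t"
    using fire_unfire_commute[OF step(1) disj tokens] step(2) by simp
  then show "unfire F (marking_of h (Cut C G (insert f Q))) t \<in> reach T F M0"
    using reach.reach_step[OF IH enabled_unfire[OF step(1) disj]] by simp
qed

lemma tar_if_max_adj:
  assumes E: "e1 \<in> E" "e1' \<in> E" "e2 \<in> E"
    and Mark_eq: "Mark C G h (local_config E G e1) = Mark C G h (local_config E G e1')"
    and post_eq: "h ` postset G e1 = h ` postset G e1'"
    and adj: "max_adj G e1' e2"
  shows "tar T F M0 (h e1) (h e2)"
proof -
  define A where "A = local_config E G e1'"
  define K where "K = local_config E G e2 - {e2}"
  define B where "B = local_config E G e1 - {e1}"
  have A: "configuration E G A" "finite A" "A \<subseteq> K" "e1' \<in> A"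
    using configuration_local_config finite_local_config max_adj_local_config(1)[OF adj E(3)] E(2)
    unfolding A_def K_def local_config_def by auto
  have K: "finite K" "configuration E G K" "\<forall>g\<in>K. (e1', g) \<notin> G\<^sup>+"
    using finite_local_config configuration_local_config_Diff[OF E(3)]
      max_adj_local_config(2)[OF adj E(3)]
    unfolding K_def by auto
  have t1: "postset F (h e1) = h ` postset G e1'"
    using bij_betw_postset[OF E(1)] post_eq unfolding bij_betw_def by simp
  have "marking_of h (Cut C G A) = marking_of h (Cut C G (local_config E G e1))"
    using marking_of_Cut_one_safe[OF one_safe] configuration_local_config finite_local_config
      E(1,2) Mark_eq unfolding A_def by auto
  then have "unfire F (marking_of h (Cut C G A)) (h e1) = marking_of h (Cut C G B)"
    using marking_of_Cut_local_config[OF E(1)] enabled_marking_of_Cut_local_config[OF E(1)]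
    unfolding B_def by (simp add: unfire_fire)
  moreover have "marking_of h (Cut C G B) \<in> reach T F M0"
    using marking_of_Cut_reach configuration_local_config_Diff[OF E(1)] finite_local_config
    unfolding B_def by blast
  ultimately have reach: "unfire F (marking_of h (Cut C G K)) (h e1) \<in> reach T F M0"
    using unfire_marking_of_Cut_reach[OF K(1,2) A(1,3,4) K(3) t1] by simp
  have "\<forall>p\<in>postset F (h e1). 1 \<le> marking_of h (Cut C G K) p"
    using t1 postset_subset_Cut[OF A(4)[THEN subsetD[OF A(3)]] K(3)]
      marking_of_Cut_one_safe[OF one_safe K(2,1)] unfolding Mark_def by auto
  then have "fire F (unfire F (marking_of h (Cut C G K)) (h e1)) (h e1) = marking_of h (Cut C G K)"
    by (rule fire_unfire)
  then show ?thesis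
    unfolding tar_def
    using reach enabled_unfire_self[OF event_label[OF E(1)]]
      enabled_marking_of_Cut_local_config[OF E(3)]
    unfolding K_def by metis
qed

end

end

theorem proposition6:
  fixes P T :: "'n set" and F :: "('n \<times> 'n) set" and M0 :: "'n \<Rightarrow> nat"
    and C E :: "'c set" and G :: "('c \<times> 'c) set" and h :: "'c \<Rightarrow> 'n"
    and prec :: "'c set \<Rightarrow> 'c set \<Rightarrow> bool" and e1 e1' e2 :: 'c
  assumes "net_system P T F M0"
    and "one_safe T F M0"
    and "is_unfolding P T F M0 C E G h"
    and "adequate_order E G prec"
    and "e1 \<in> prefix_events C E G h prec"
    and "corresponding C E G h prec e1 e1'"
    and "h ` postset G e1 = h ` postset G e1'"
    and "e2 \<in> prefix_events C E G h prec"
  shows "max_adj G e1' e2 \<longrightarrow> tar T F M0 (h e1) (h e2)"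
proof
  assume adj: "max_adj G e1' e2"
  interpret branching_proc P T F M0 C E G h
    using assms(3) unfolding is_unfolding_def by unfold_locales blast
  show "tar T F M0 (h e1) (h e2)"
  proof (rule tar_if_max_adj[OF assms(2) _ _ _ _ assms(7) adj])
    show "e1 \<in> E" "e1' \<in> E"
      and "Mark C G h (local_config E G e1) = Mark C G h (local_config E G e1')"
      using assms(6) unfolding corresponding_def by blast+
    show "e2 \<in> E" using assms(8) unfolding prefix_events_def by blast
  qed
qed

end
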